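(* Let $m\ge0$ be an integer. For $i\ge1$ put $\gamma_i=u-(1-zt)(1-t)^{i-1}(u-1)$. Then, as formal power series in $u,z,t$, $$\sum_{k\ge0}\frac{(u-1)^{m+1}(1-zt)^{m+1}u^k(1-t)^{k(m+1)}}{\prod_{i=1}^{k+1}\gamma_i}=-\sum_{j=0}^m(u-1)^j(1-zt)^ju^{m-j}\prod_{i=j+1}^m\bigl(1-(1-t)^i\bigr).$$
   Context: Each $\gamma_i$ has constant term $1$, so the quotients are formal power series over $\mathbb{Q}$, and the $k$-th summand is divisible by $u^k$, so the sum converges formally. An empty product equals $1$. *)

theory Defs
  imports "HOL-Computational_Algebra.Formal_Power_Series"
begin

text \<open>Formal power series in u, z, t over the rationals, realised as nested
  power series: u is the outermost variable, then z, then t.  The topology used for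
  the infinite sum is the u-adic topology of the outer fps type; since the k-th
  summand is divisible by u^k this is the formal convergence of the paper.\<close>

type_synonym fps3 = "rat fps fps fps"

definition U :: fps3 where "U = fps_X"
definition Z :: fps3 where "Z = fps_const fps_X"
definition T :: fps3 where "T = fps_const (fps_const fps_X)"

definition gam :: "nat \<Rightarrow> fps3" where
  "gam i = U - (1 - Z * T) * (1 - T) ^ (i - 1) * (U - 1)"

end

theory Submission
  imports Defs
begin

text \<open>Write \<open>a = (u - 1)(1 - z t)\<close> and \<open>q = 1 - t\<close>, so that \<open>gam (n + 1) = u - a q^n\<close>, and put
  \<open>G(b) = \<Sum>j\<le>m. b^j u^(m - j) \<Prod>i=j+1..m. (1 - q^i)\<close>. The polynomial identity
  \<open>u G(b q) - (u - b) G(b) = b^(m + 1)\<close> shows that the \<open>k\<close>-th summand is \<open>D (k + 1) - D k\<close>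
  with \<open>D n = u^n G(a q^n) / (gam 1 \<cdots> gam n)\<close>. Hence the partial sums are \<open>D n - G(a)\<close>,
  and \<open>D n \<longlonglongrightarrow> 0\<close> in the \<open>u\<close>-adic topology because \<open>u^n\<close> divides \<open>D n\<close>.\<close>

unbundle fps_syntax

definition qpoch_sum :: "nat \<Rightarrow> 'a::comm_ring_1 \<Rightarrow> 'a \<Rightarrow> 'a \<Rightarrow> 'a" where
  "qpoch_sum m q u b = (\<Sum>j = 0..m. b ^ j * u ^ (m - j) * (\<Prod>i = j + 1..m. 1 - q ^ i))"

lemma qpoch_sum_0 [simp]: "qpoch_sum 0 q u b = 1"
  by (simp add: qpoch_sum_def)

lemma qpoch_sum_Suc:
  "qpoch_sum (Suc m) q u b = u * (1 - q ^ Suc m) * qpoch_sum m q u b + b ^ Suc m"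
proof -
  have "b ^ j * u ^ (Suc m - j) * (\<Prod>i = j + 1..Suc m. 1 - q ^ i)
      = u * (1 - q ^ Suc m) * (b ^ j * u ^ (m - j) * (\<Prod>i = j + 1..m. 1 - q ^ i))"
    if "j \<le> m" for j
  proof -
    have "u ^ (Suc m - j) = u * u ^ (m - j)"
      using that by (simp add: Suc_diff_le)
    moreover have "(\<Prod>i = j + 1..Suc m. 1 - q ^ i)
        = (1 - q ^ Suc m) * (\<Prod>i = j + 1..m. 1 - q ^ i)"
      using that by (simp add: prod.nat_ivl_Suc')
    ultimately show ?thesis
      by (simp only: mult_ac)
  qed
  then show ?thesis
    by (simp add: qpoch_sum_def sum.atLeast0_atMost_Suc sum_distrib_left)
qed

lemma qpoch_sum_shift:
  "u * qpoch_sum m q u (b * q) - (u - b) * qpoch_sum m q u b = b ^ Suc m"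
proof (induction m)
  case 0
  then show ?case by simp
next
  case (Suc m)
  let ?c = "u * (1 - q ^ Suc m)"
  have "u * qpoch_sum (Suc m) q u (b * q) - (u - b) * qpoch_sum (Suc m) q u b
      = ?c * (u * qpoch_sum m q u (b * q) - (u - b) * qpoch_sum m q u b)
        + u * (b * q) ^ Suc m - (u - b) * b ^ Suc m"
    by (simp add: qpoch_sum_Suc algebra_simps)
  also have "\<dots> = b ^ Suc (Suc m)"
    unfolding Suc.IH by (simp add: algebra_simps power_mult_distrib)
  finally show ?case .
qed

lemma qpoch_telescope:
  fixes u a q :: "'a::{comm_ring_1,inverse}" and P :: "nat \<Rightarrow> 'a"
  assumes P_0: "P 0 = 1"
    and P_Suc: "\<And>n. P (Suc n) = P n * (u - a * q ^ n)"
    and P_unit: "\<And>n. P n * inverse (P n) = 1"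
  shows "(\<Sum>k<n. u ^ k * (a * q ^ k) ^ Suc m * inverse (P (Suc k)))
       = u ^ n * inverse (P n) * qpoch_sum m q u (a * q ^ n) - qpoch_sum m q u a"
proof (induction n)
  case 0
  have "inverse (P 0) = 1"
    using P_unit[of 0] by (simp add: P_0)
  then show ?case by simp
next
  case (Suc n)
  have inverse_P: "inverse (P n) = (u - a * q ^ n) * inverse (P (Suc n))"
  proof -
    have "inverse (P n) = inverse (P n) * (P (Suc n) * inverse (P (Suc n)))"
      by (simp add: P_unit)
    also have "\<dots> = (P n * inverse (P n)) * (u - a * q ^ n) * inverse (P (Suc n))"
      by (simp add: P_Suc algebra_simps)
    finally show ?thesis
      by (simp add: P_unit)
  qed
  have "u ^ Suc n * inverse (P (Suc n)) * qpoch_sum m q u (a * q ^ Suc n)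
        - u ^ n * inverse (P n) * qpoch_sum m q u (a * q ^ n)
      = u ^ n * inverse (P (Suc n)) * (u * qpoch_sum m q u (a * q ^ n * q)
          - (u - a * q ^ n) * qpoch_sum m q u (a * q ^ n))"
    unfolding inverse_P by (simp add: algebra_simps)
  also have "\<dots> = u ^ n * (a * q ^ n) ^ Suc m * inverse (P (Suc n))"
    unfolding qpoch_sum_shift by (simp only: mult_ac)
  finally show ?case
    unfolding sum.lessThan_Suc Suc.IH by (simp add: algebra_simps)
qed

lemma fps_mult_inverse_eq_1:
  fixes f :: "'a::{ring_1,inverse} fps"
  assumes "f $ 0 * inverse (f $ 0) = 1"
  shows "f * inverse f = 1"
  using fps_right_inverse[OF assms] by (simp add: fps_inverse_def)

lemma fps3_mult_inverse_eq_1: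
  fixes f :: "'a::field fps fps fps"
  assumes "f $ 0 $ 0 $ 0 \<noteq> 0"
  shows "f * inverse f = 1"
  using assms by (intro fps_mult_inverse_eq_1) (simp add: inverse_mult_eq_1')

lemma fps_prod_nth_0: "prod f A $ 0 = (\<Prod>i\<in>A. f i $ 0)"
  by (induction A rule: infinite_finite_induct) auto

lemma tendsto_fps_X_power_mult_add_const:
  fixes f :: "nat \<Rightarrow> 'a::comm_ring_1 fps"
  shows "(\<lambda>n. fps_X ^ n * f n + c) \<longlonglongrightarrow> c"
proof (rule tendsto_fpsI)
  fix k
  show "\<forall>\<^sub>F n in sequentially. (fps_X ^ n * f n + c) $ k = c $ k"
    using eventually_gt_at_top[of k] by eventually_elim (simp add: fps_X_power_mult_nth)
qed

definition gam_prod :: "nat \<Rightarrow> fps3" where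
  "gam_prod n = (\<Prod>i = 1..n. gam i)"

lemma gam_prod_0: "gam_prod 0 = 1"
  by (simp add: gam_prod_def)

lemma gam_prod_Suc: "gam_prod (Suc n) = gam_prod n * (U - (U - 1) * (1 - Z * T) * (1 - T) ^ n)"
  by (simp add: gam_prod_def prod.nat_ivl_Suc' gam_def algebra_simps)

lemma gam_prod_unit: "gam_prod n * inverse (gam_prod n) = 1"
  by (intro fps3_mult_inverse_eq_1)
    (simp add: gam_prod_def fps_prod_nth_0 gam_def U_def Z_def T_def fps_power_zeroth)

theorem lemma7:
  fixes m :: nat
  shows "(\<lambda>k. (U - 1) ^ (m + 1) * (1 - Z * T) ^ (m + 1) * U ^ k * (1 - T) ^ (k * (m + 1))
              * inverse (\<Prod>i = 1..k + 1. gam i))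
         sums (- (\<Sum>j = 0..m. (U - 1) ^ j * (1 - Z * T) ^ j * U ^ (m - j)
                               * (\<Prod>i = j + 1..m. 1 - (1 - T) ^ i)))"
proof -
  define a where "a = (U - 1) * (1 - Z * T)"
  define q where "q = 1 - T"
  note telescope = qpoch_telescope[OF gam_prod_0 gam_prod_Suc[folded a_def q_def] gam_prod_unit]
  have summand: "(U - 1) ^ (m + 1) * (1 - Z * T) ^ (m + 1) * U ^ k * (1 - T) ^ (k * (m + 1))
        * inverse (\<Prod>i = 1..k + 1. gam i)
      = U ^ k * (a * q ^ k) ^ Suc m * inverse (gam_prod (Suc k))" for k
  proof -
    have "(a * q ^ k) ^ Suc m
        = (U - 1) ^ (m + 1) * (1 - Z * T) ^ (m + 1) * (1 - T) ^ (k * (m + 1))"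
      unfolding a_def q_def power_mult_distrib power_mult Suc_eq_plus1 ..
    then show ?thesis
      unfolding gam_prod_def Suc_eq_plus1 by (simp only: mult_ac)
  qed
  have "(\<lambda>n. U ^ n * inverse (gam_prod n) * qpoch_sum m q U (a * q ^ n) - qpoch_sum m q U a)
      \<longlonglongrightarrow> - qpoch_sum m q U a"
    using tendsto_fps_X_power_mult_add_const
      [of "\<lambda>n. inverse (gam_prod n) * qpoch_sum m q U (a * q ^ n)" "- qpoch_sum m q U a"]
    by (simp add: U_def mult.assoc)
  then have "(\<lambda>k. U ^ k * (a * q ^ k) ^ Suc m * inverse (gam_prod (Suc k)))
      sums (- qpoch_sum m q U a)"
    unfolding sums_def telescope .
  then show ?thesis
    unfolding summand by (simp add: a_def q_def qpoch_sum_def power_mult_distrib)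
qed

end
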